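(* Let $\Omega$ be an infinite set and let $0<k<j$ be integers. Then every graph automorphism of $\Gamma^\Omega_{j;k}$ is induced by a permutation of $\Omega$.
   Context: $\Gamma^\Omega_{j;k}$ is the graph whose vertices are the $j$-element subsets of $\Omega$, two being adjacent iff their intersection has exactly $k$ elements. *)

theory Defs
  imports Main
begin

definition kset :: "'a set \<Rightarrow> nat \<Rightarrow> 'a set set" where
  "kset \<Omega> j = {A. A \<subseteq> \<Omega> \<and> finite A \<and> card A = j}"

definition gamma_adj :: "nat \<Rightarrow> 'a set \<Rightarrow> 'a set \<Rightarrow> bool" where
  "gamma_adj k A B \<longleftrightarrow> card (A \<inter> B) = k"

definition gamma_aut :: "'a set \<Rightarrow> nat \<Rightarrow> nat \<Rightarrow> ('a set \<Rightarrow> 'a set) \<Rightarrow> bool" where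
  "gamma_aut \<Omega> j k \<sigma> \<longleftrightarrow>
     bij_betw \<sigma> (kset \<Omega> j) (kset \<Omega> j) \<and>
     (\<forall>A\<in>kset \<Omega> j. \<forall>B\<in>kset \<Omega> j. gamma_adj k (\<sigma> A) (\<sigma> B) \<longleftrightarrow> gamma_adj k A B)"

definition induced_by_perm :: "'a set \<Rightarrow> nat \<Rightarrow> ('a set \<Rightarrow> 'a set) \<Rightarrow> bool" where
  "induced_by_perm \<Omega> j \<sigma> \<longleftrightarrow>
     (\<exists>g. bij_betw g \<Omega> \<Omega> \<and> (\<forall>A\<in>kset \<Omega> j. \<sigma> A = g ` A))"

end

theory Submission
  imports Defs "HOL-Library.Nat_Bijection"
begin

text \<open>An infinite clique of the graph is a sunflower whose core \<open>K\<close> is a \<open>k\<close>-set, and the vertices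
  adjacent to infinitely many of its members are exactly the \<open>j\<close>-sets containing \<open>K\<close>. As this
  description is invariant under automorphisms, \<open>\<sigma>\<close> permutes these stars and so induces a
  bijection \<open>\<tau>\<close> of the \<open>k\<close>-sets with \<open>K \<subseteq> X \<longleftrightarrow> \<tau> K \<subseteq> \<sigma> X\<close>. Now \<open>\<tau>\<close> maps the \<open>k\<close>-subsets of
  \<open>A \<inter> B\<close> injectively to those of \<open>\<sigma> A \<inter> \<sigma> B\<close>, so comparing binomial coefficients shows that \<open>\<sigma>\<close>
  preserves \<open>|A \<inter> B| = j - 1\<close>: it is an automorphism of the Johnson graph \<open>\<Gamma>(j; j - 1)\<close>. For
  that graph the induced \<open>\<tau>\<close> on \<open>(j - 1)\<close>-sets is again a Johnson automorphism, because
  \<open>|K \<inter> L| = j - 2\<close> holds iff \<open>K \<noteq> L\<close> lie in a common \<open>j\<close>-set; induction on \<open>j\<close> down to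
  singletons yields the permutation of \<open>\<Omega>\<close>.\<close>

definition kset_containing :: "'a set \<Rightarrow> nat \<Rightarrow> 'a set \<Rightarrow> 'a set set" where
  "kset_containing \<Omega> n K = {X \<in> kset \<Omega> n. K \<subseteq> X}"

definition gamma_clique :: "nat \<Rightarrow> 'a set set \<Rightarrow> bool" where
  "gamma_clique k Q \<longleftrightarrow> (\<forall>A\<in>Q. \<forall>B\<in>Q. A \<noteq> B \<longrightarrow> gamma_adj k A B)"

definition inf_adjacent :: "'a set \<Rightarrow> nat \<Rightarrow> nat \<Rightarrow> 'a set set \<Rightarrow> 'a set set" where
  "inf_adjacent \<Omega> n k Q = {X \<in> kset \<Omega> n. infinite {Y\<in>Q. gamma_adj k X Y}}"

lemma finite_if_subsingleton:
  assumes "\<forall>a\<in>S. \<forall>b\<in>S. a = b"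
  shows "finite S"
proof (cases "S = {}")
  case False
  then obtain a where "a \<in> S" by blast
  with assms have "S \<subseteq> {a}" by blast
  then show ?thesis by (rule finite_subset) simp
qed simp

lemma finite_meets_outside_core:
  assumes "\<forall>Y\<in>Q. \<forall>Y'\<in>Q. Y \<noteq> Y' \<longrightarrow> Y \<inter> Y' \<subseteq> K" and "finite X"
  shows "finite {Y\<in>Q. \<not> X \<inter> Y \<subseteq> K}"
proof -
  have "{Y\<in>Q. \<not> X \<inter> Y \<subseteq> K} = (\<Union>x\<in>X. {Y\<in>Q. x \<in> Y - K})" by auto
  moreover have "finite {Y\<in>Q. x \<in> Y - K}" for x
    using assms(1) by (intro finite_if_subsingleton) blast
  ultimately show ?thesis using assms(2) by simp
qed

lemma clique_Int_eq_core:
  assumes "gamma_clique k Q" "Y \<in> Q" "Y' \<in> Q" "Y \<noteq> Y'" "finite Y"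
    and "K \<subseteq> Y \<inter> Y'" "card K = k"
  shows "Y \<inter> Y' = K"
  using assms card_subset_eq[of "Y \<inter> Y'" K]
  by (auto simp: gamma_clique_def gamma_adj_def)

lemma infinite_clique_core:
  assumes Q: "Q \<subseteq> kset \<Omega> n" "infinite Q" "gamma_clique k Q"
  obtains K where "finite K" "card K = k" "\<forall>Y\<in>Q. K \<subseteq> Y"
proof -
  have fin: "finite Y" if "Y \<in> Q" for Y
    using Q(1) that by (auto simp: kset_def)
  obtain A where A: "A \<in> Q"
    using Q(2) infinite_imp_nonempty by blast
  have "finite ((\<inter>) A ` (Q - {A}))"
    by (rule finite_subset[of _ "Pow A"]) (use fin A in auto)
  then obtain B where B: "B \<in> Q - {A}" and inf: "infinite {Y \<in> Q - {A}. A \<inter> Y = A \<inter> B}"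
    using pigeonhole_infinite[of "Q - {A}"] Q(2) by auto
  define K where "K = A \<inter> B"
  define P where "P = {Y \<in> Q - {A}. A \<inter> Y = K}"
  have K: "finite K" "card K = k"
    using Q(3) A B fin by (auto simp: K_def gamma_clique_def gamma_adj_def)
  have "infinite P"
    using inf by (simp add: P_def K_def)
  \<comment> \<open>\<open>P\<close> is a sunflower with core \<open>K\<close>; any \<open>C \<in> Q\<close> meets all but finitely many of its petals
    inside \<open>K\<close>, in exactly \<open>k\<close> points.\<close>
  have petals: "\<forall>Y\<in>P. \<forall>Y'\<in>P. Y \<noteq> Y' \<longrightarrow> Y \<inter> Y' \<subseteq> K"
    using clique_Int_eq_core[OF Q(3) _ _ _ fin _ K(2)] by (auto simp: P_def)
  have "K \<subseteq> C" if C: "C \<in> Q" for C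
  proof -
    have "finite {Y \<in> P. \<not> C \<inter> Y \<subseteq> K}"
      using finite_meets_outside_core[OF petals fin[OF C]] .
    then have "infinite (P - {Y \<in> P. \<not> C \<inter> Y \<subseteq> K} - {C})"
      using \<open>infinite P\<close> by simp
    then obtain Y where "Y \<in> P - {Y \<in> P. \<not> C \<inter> Y \<subseteq> K} - {C}"
      using infinite_imp_nonempty by blast
    then have Y: "Y \<in> Q" "Y \<noteq> C" "C \<inter> Y \<subseteq> K"
      by (auto simp: P_def)
    have "card (C \<inter> Y) = k"
      using Q(3) C Y by (auto simp: gamma_clique_def gamma_adj_def)
    then have "C \<inter> Y = K"
      using card_subset_eq[OF K(1) Y(3)] K(2) by simp
    then show ?thesis
      by blast
  qed
  with K that show ?thesis by blast
qed

lemma inf_adjacent_clique_eq: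
  assumes Q: "Q \<subseteq> kset \<Omega> n" "infinite Q" "gamma_clique k Q"
    and K: "card K = k" "\<forall>Y\<in>Q. K \<subseteq> Y"
  shows "inf_adjacent \<Omega> n k Q = kset_containing \<Omega> n K"
proof -
  have fin: "finite Y" if "Y \<in> Q" for Y
    using Q(1) that by (auto simp: kset_def)
  have petals: "\<forall>Y\<in>Q. \<forall>Y'\<in>Q. Y \<noteq> Y' \<longrightarrow> Y \<inter> Y' \<subseteq> K"
    using clique_Int_eq_core[OF Q(3) _ _ _ fin _ K(1)] K(2) by blast
  have "infinite {Y \<in> Q. gamma_adj k X Y} \<longleftrightarrow> K \<subseteq> X" if X: "X \<in> kset \<Omega> n" for X
  proof -
    define E where "E = {Y \<in> Q. \<not> X \<inter> Y \<subseteq> K}"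
    have E: "finite E"
      unfolding E_def using finite_meets_outside_core[OF petals] X by (simp add: kset_def)
    have "X \<inter> Y = K \<longleftrightarrow> K \<subseteq> X" if "Y \<in> Q - E" for Y
      using that K(2) by (auto simp: E_def)
    moreover have "card (X \<inter> Y) = k \<longleftrightarrow> X \<inter> Y = K" if "Y \<in> Q - E" for Y
    proof -
      have "finite K" "X \<inter> Y \<subseteq> K"
        using that K(2) fin by (auto simp: E_def intro: finite_subset)
      then show ?thesis
        using K(1) card_subset_eq[of K "X \<inter> Y"] by auto
    qed
    ultimately have eq: "{Y \<in> Q. gamma_adj k X Y} - E = (if K \<subseteq> X then Q - E else {})"
      by (auto simp: gamma_adj_def)
    have "infinite {Y \<in> Q. gamma_adj k X Y} \<longleftrightarrow> infinite ({Y \<in> Q. gamma_adj k X Y} - E)"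
      using E by simp
    also have "\<dots> \<longleftrightarrow> K \<subseteq> X"
      unfolding eq using E Q(2) by simp
    finally show ?thesis .
  qed
  then show ?thesis
    unfolding inf_adjacent_def kset_containing_def by (intro Collect_cong conj_cong) simp_all
qed

lemma exists_infinite_clique_containing:
  assumes "infinite \<Omega>" "K \<subseteq> \<Omega>" "finite K" "card K = k" "k < n"
  obtains Q where "Q \<subseteq> kset \<Omega> n" "infinite Q" "gamma_clique k Q" "\<forall>Y\<in>Q. K \<subseteq> Y"
proof -
  obtain f :: "nat \<Rightarrow> 'a" where f: "inj f" "range f \<subseteq> \<Omega> - K"
    using infinite_countable_subset assms(1,3) by (metis finite_Diff2)
  define h where "h = f \<circ> prod_encode"
  have h: "inj h" "range h \<subseteq> \<Omega> - K"
    using f by (auto simp: h_def inj_compose inj_prod_encode)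
  define Y where "Y i = K \<union> h ` ({i} \<times> {..<n - k})" for i
  have card_Y: "card (Y i) = n" for i
  proof -
    have "card (h ` ({i} \<times> {..<n - k})) = n - k"
      using h(1) by (simp add: card_image inj_on_subset card_cartesian_product)
    moreover have "K \<inter> h ` ({i} \<times> {..<n - k}) = {}"
      using h(2) by blast
    ultimately show ?thesis
      using assms(3-5) by (simp add: Y_def card_Un_disjoint)
  qed
  have Y_Int: "Y i \<inter> Y i' = K" if "i \<noteq> i'" for i i'
  proof -
    have "h ` ({i} \<times> {..<n - k}) \<inter> h ` ({i'} \<times> {..<n - k}) = {}"
      using that by (auto simp: image_Int[OF h(1), symmetric])
    then show ?thesis
      using h(2) by (auto simp: Y_def)
  qed
  have "inj Y"
  proof (rule injI, rule ccontr)
    fix i i' assume "Y i = Y i'" "i \<noteq> i'"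
    then have "Y i = K"
      using Y_Int by blast
    moreover have "h (i, 0) \<in> Y i - K"
      using h(2) assms(5) by (auto simp: Y_def)
    ultimately show False
      by blast
  qed
  show ?thesis
  proof
    show "range Y \<subseteq> kset \<Omega> n"
      using card_Y h(2) assms(2,3) by (auto simp: kset_def Y_def)
    show "infinite (range Y)"
      using \<open>inj Y\<close> finite_imageD infinite_UNIV_nat by blast
    show "gamma_clique k (range Y)"
      unfolding gamma_clique_def gamma_adj_def
    proof (intro ballI impI)
      fix A B assume "A \<in> range Y" "B \<in> range Y" "A \<noteq> B"
      then obtain i i' where "A = Y i" "B = Y i'" "i \<noteq> i'"
        by blast
      then show "card (A \<inter> B) = k"
        using Y_Int assms(4) by simp
    qed
    show "\<forall>Z\<in>range Y. K \<subseteq> Z"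
      by (auto simp: Y_def)
  qed
qed

lemma kset_containing_antimono:
  assumes "infinite \<Omega>" "K \<subseteq> \<Omega>" "finite K" "card K \<le> n"
    and "kset_containing \<Omega> n K \<subseteq> kset_containing \<Omega> n L"
  shows "L \<subseteq> K"
proof
  fix x assume "x \<in> L"
  have "infinite (\<Omega> - insert x K)"
    using assms(1,3) by simp
  then obtain P where P: "finite P" "card P = n - card K" "P \<subseteq> \<Omega> - insert x K"
    using infinite_arbitrarily_large by blast
  have "card (K \<union> P) = n"
    using P assms(3,4) by (subst card_Un_disjoint) auto
  then have "K \<union> P \<in> kset_containing \<Omega> n K"
    using P assms(2,3) by (auto simp: kset_containing_def kset_def)
  then have "L \<subseteq> K \<union> P"
    using assms(5) by (auto simp: kset_containing_def)
  then show "x \<in> K"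
    using \<open>x \<in> L\<close> P(3) by blast
qed

lemma kset_containing_inject:
  assumes "infinite \<Omega>" "K \<in> kset \<Omega> k" "L \<in> kset \<Omega> k" "k \<le> n"
    and "kset_containing \<Omega> n K = kset_containing \<Omega> n L"
  shows "K = L"
  using kset_containing_antimono[of \<Omega> K n L] kset_containing_antimono[of \<Omega> L n K] assms
  by (auto simp: kset_def)

lemma gamma_autD:
  assumes "gamma_aut \<Omega> n k \<sigma>"
  shows "inj_on \<sigma> (kset \<Omega> n)" "\<sigma> ` kset \<Omega> n = kset \<Omega> n"
    and "\<And>A B. A \<in> kset \<Omega> n \<Longrightarrow> B \<in> kset \<Omega> n \<Longrightarrow>
      gamma_adj k (\<sigma> A) (\<sigma> B) \<longleftrightarrow> gamma_adj k A B"
  using assms by (auto simp: gamma_aut_def bij_betw_def)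

lemma gamma_aut_inv_into:
  assumes "gamma_aut \<Omega> n k \<sigma>"
  shows "gamma_aut \<Omega> n k (inv_into (kset \<Omega> n) \<sigma>)"
proof -
  let ?V = "kset \<Omega> n" and ?\<rho> = "inv_into (kset \<Omega> n) \<sigma>"
  have bij: "bij_betw ?\<rho> ?V ?V"
    using assms by (simp add: gamma_aut_def bij_betw_inv_into)
  have "gamma_adj k (?\<rho> A) (?\<rho> B) \<longleftrightarrow> gamma_adj k A B" if "A \<in> ?V" "B \<in> ?V" for A B
    using gamma_autD(3)[OF assms, of "?\<rho> A" "?\<rho> B"] bij_betw_apply[OF bij] that
      f_inv_into_f[of _ \<sigma> ?V] gamma_autD(2)[OF assms] by simp
  with bij show ?thesis
    by (simp add: gamma_aut_def)
qed

lemma gamma_aut_image_clique: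
  assumes "gamma_aut \<Omega> n k \<sigma>" "Q \<subseteq> kset \<Omega> n" "gamma_clique k Q"
  shows "gamma_clique k (\<sigma> ` Q)"
  using assms gamma_autD(3)[OF assms(1)] by (auto simp: gamma_clique_def subset_iff)

lemma gamma_aut_image_inf_adjacent:
  assumes \<sigma>: "gamma_aut \<Omega> n k \<sigma>" and Q: "Q \<subseteq> kset \<Omega> n"
  shows "\<sigma> ` inf_adjacent \<Omega> n k Q = inf_adjacent \<Omega> n k (\<sigma> ` Q)"
proof -
  note inj = gamma_autD(1)[OF \<sigma>] and surj = gamma_autD(2)[OF \<sigma>]
    and adj = gamma_autD(3)[OF \<sigma>]
  have "\<sigma> X \<in> inf_adjacent \<Omega> n k (\<sigma> ` Q) \<longleftrightarrow> X \<in> inf_adjacent \<Omega> n k Q"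
    if X: "X \<in> kset \<Omega> n" for X
  proof -
    have "{Z \<in> \<sigma> ` Q. gamma_adj k (\<sigma> X) Z} = \<sigma> ` {Y \<in> Q. gamma_adj k X Y}"
      using adj[OF X] Q by auto
    moreover have "inj_on \<sigma> {Y \<in> Q. gamma_adj k X Y}"
      using Q by (auto intro: inj_on_subset[OF inj])
    ultimately show ?thesis
      using X surj by (auto simp: inf_adjacent_def finite_image_iff)
  qed
  moreover have "inf_adjacent \<Omega> n k R \<subseteq> kset \<Omega> n" for R
    by (auto simp: inf_adjacent_def)
  ultimately show ?thesis
    using equalityD2[OF surj] by blast
qed

lemma gamma_aut_image_kset_containing:
  assumes "infinite \<Omega>" "k < n" "gamma_aut \<Omega> n k \<sigma>" "K \<in> kset \<Omega> k"
  obtains L where "L \<in> kset \<Omega> k" "\<sigma> ` kset_containing \<Omega> n K = kset_containing \<Omega> n L"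
proof -
  have K: "K \<subseteq> \<Omega>" "finite K" "card K = k"
    using assms(4) by (auto simp: kset_def)
  obtain Q where Q: "Q \<subseteq> kset \<Omega> n" "infinite Q" "gamma_clique k Q" "\<forall>Y\<in>Q. K \<subseteq> Y"
    using exists_infinite_clique_containing[OF assms(1) K assms(2)] .
  have \<sigma>Q: "\<sigma> ` Q \<subseteq> kset \<Omega> n" "infinite (\<sigma> ` Q)" "gamma_clique k (\<sigma> ` Q)"
  proof -
    show "\<sigma> ` Q \<subseteq> kset \<Omega> n"
      using Q(1) gamma_autD(2)[OF assms(3)] by blast
    show "infinite (\<sigma> ` Q)"
      using Q(2) inj_on_subset[OF gamma_autD(1)[OF assms(3)] Q(1)] by (simp add: finite_image_iff)
    show "gamma_clique k (\<sigma> ` Q)"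
      using gamma_aut_image_clique[OF assms(3) Q(1,3)] .
  qed
  obtain L where L: "finite L" "card L = k" "\<forall>Y\<in>\<sigma> ` Q. L \<subseteq> Y"
    using infinite_clique_core[OF \<sigma>Q] .
  have "\<sigma> ` kset_containing \<Omega> n K = \<sigma> ` inf_adjacent \<Omega> n k Q"
    using inf_adjacent_clique_eq[OF Q(1-3) K(3) Q(4)] by simp
  also have "\<dots> = inf_adjacent \<Omega> n k (\<sigma> ` Q)"
    using gamma_aut_image_inf_adjacent[OF assms(3) Q(1)] .
  also have "\<dots> = kset_containing \<Omega> n L"
    using inf_adjacent_clique_eq[OF \<sigma>Q L(2,3)] .
  finally have "\<sigma> ` kset_containing \<Omega> n K = kset_containing \<Omega> n L" .
  moreover have "L \<subseteq> \<Omega>"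
  proof -
    obtain Y where "Y \<in> \<sigma> ` Q"
      using \<sigma>Q(2) infinite_imp_nonempty by blast
    then have "L \<subseteq> Y" "Y \<subseteq> \<Omega>"
      using L(3) \<sigma>Q(1) by (auto simp: kset_def)
    then show ?thesis
      by blast
  qed
  ultimately show ?thesis
    using L(1,2) that by (simp add: kset_def)
qed

lemma gamma_aut_image_kset_containing_surj:
  assumes "infinite \<Omega>" "k < n" "gamma_aut \<Omega> n k \<sigma>" "L \<in> kset \<Omega> k"
  obtains K where "K \<in> kset \<Omega> k" "\<sigma> ` kset_containing \<Omega> n K = kset_containing \<Omega> n L"
proof -
  let ?\<rho> = "inv_into (kset \<Omega> n) \<sigma>"
  obtain K where K: "K \<in> kset \<Omega> k" "?\<rho> ` kset_containing \<Omega> n L = kset_containing \<Omega> n K"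
    using gamma_aut_image_kset_containing[OF assms(1,2) gamma_aut_inv_into[OF assms(3)] assms(4)] .
  have "kset_containing \<Omega> n L \<subseteq> kset \<Omega> n"
    by (auto simp: kset_containing_def)
  then have "\<sigma> ` ?\<rho> ` kset_containing \<Omega> n L = kset_containing \<Omega> n L"
    using image_inv_into_cancel[OF gamma_autD(2)[OF assms(3)]] by blast
  with K that show ?thesis
    by simp
qed

lemma gamma_aut_induced_kset_bij:
  assumes "infinite \<Omega>" "k < n" "gamma_aut \<Omega> n k \<sigma>"
  obtains \<tau> where "bij_betw \<tau> (kset \<Omega> k) (kset \<Omega> k)"
    and "\<forall>K\<in>kset \<Omega> k. \<forall>X\<in>kset \<Omega> n. K \<subseteq> X \<longleftrightarrow> \<tau> K \<subseteq> \<sigma> X"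
proof -
  let ?V = "kset \<Omega> n" and ?W = "kset \<Omega> k"
  note inj = gamma_autD(1)[OF assms(3)] and surj = gamma_autD(2)[OF assms(3)]
  note inject = kset_containing_inject[OF assms(1) _ _ less_imp_le[OF assms(2)]]
  have sub_V: "kset_containing \<Omega> n K \<subseteq> ?V" for K
    by (auto simp: kset_containing_def)
  have "\<forall>K\<in>?W. \<exists>L. L \<in> ?W \<and> \<sigma> ` kset_containing \<Omega> n K = kset_containing \<Omega> n L"
  proof
    fix K assume "K \<in> ?W"
    then obtain L where "L \<in> ?W" "\<sigma> ` kset_containing \<Omega> n K = kset_containing \<Omega> n L"
      by (rule gamma_aut_image_kset_containing[OF assms])
    then show "\<exists>L. L \<in> ?W \<and> \<sigma> ` kset_containing \<Omega> n K = kset_containing \<Omega> n L"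
      by blast
  qed
  then obtain \<tau> where \<tau>: "\<forall>K\<in>?W. \<tau> K \<in> ?W \<and>
      \<sigma> ` kset_containing \<Omega> n K = kset_containing \<Omega> n (\<tau> K)"
    by (rule bchoice[THEN exE])
  have "inj_on \<tau> ?W"
  proof (rule inj_onI)
    fix K L assume KL: "K \<in> ?W" "L \<in> ?W" "\<tau> K = \<tau> L"
    then have "\<sigma> ` kset_containing \<Omega> n K = \<sigma> ` kset_containing \<Omega> n L"
      using \<tau> by simp
    then have "kset_containing \<Omega> n K = kset_containing \<Omega> n L"
      using inj_on_image_eq_iff[OF inj sub_V sub_V] by simp
    then show "K = L"
      by (rule inject[OF KL(1,2)])
  qed
  moreover have "?W \<subseteq> \<tau> ` ?W"
  proof
    fix L assume L: "L \<in> ?W"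
    obtain K where K: "K \<in> ?W" "\<sigma> ` kset_containing \<Omega> n K = kset_containing \<Omega> n L"
      using gamma_aut_image_kset_containing_surj[OF assms L] .
    then have "\<tau> K \<in> ?W" "kset_containing \<Omega> n (\<tau> K) = kset_containing \<Omega> n L"
      using \<tau> by auto
    then have "\<tau> K = L"
      using inject L by blast
    with K(1) show "L \<in> \<tau> ` ?W"
      by blast
  qed
  moreover have "\<tau> ` ?W \<subseteq> ?W"
    using \<tau> by blast
  ultimately have "bij_betw \<tau> ?W ?W"
    by (simp add: bij_betw_def subset_antisym)
  moreover have "K \<subseteq> X \<longleftrightarrow> \<tau> K \<subseteq> \<sigma> X" if "K \<in> ?W" "X \<in> ?V" for K X
  proof -
    have "K \<subseteq> X \<longleftrightarrow> \<sigma> X \<in> \<sigma> ` kset_containing \<Omega> n K"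
      using that inj sub_V by (simp add: inj_on_image_mem_iff kset_containing_def)
    also have "\<dots> \<longleftrightarrow> \<tau> K \<subseteq> \<sigma> X"
      using \<tau> imageI[of X ?V \<sigma>] that surj by (simp add: kset_containing_def)
    finally show ?thesis .
  qed
  ultimately show ?thesis
    using that by blast
qed

lemma binomial_right_strict_mono:
  assumes "0 < k" "k \<le> n" "m < n"
  shows "m choose k < n choose k"
proof -
  obtain n' k' where n: "n = Suc n'" and k: "k = Suc k'"
    using assms by (metis gr0_implies_Suc less_imp_Suc_add)
  have "m choose k \<le> n' choose k"
    using assms(3) n by (intro binomial_right_mono) simp
  moreover have "0 < n' choose k'"
    using assms(2) n k by simp
  moreover have "n choose k = (n' choose k') + (n' choose k)"
    using n k by simp
  ultimately show ?thesis
    by linarith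
qed

lemma kset_card_Int_less:
  assumes "A \<in> kset \<Omega> n" "B \<in> kset \<Omega> n" "A \<noteq> B"
  shows "card (A \<inter> B) < n"
proof (rule ccontr)
  have A: "finite A" "card A = n" and B: "finite B" "card B = n"
    using assms(1,2) by (auto simp: kset_def)
  assume "\<not> card (A \<inter> B) < n"
  then have "card (A \<inter> B) = n"
    using card_mono[OF A(1), of "A \<inter> B"] A(2) by simp
  then have "A \<inter> B = A" "A \<inter> B = B"
    using card_subset_eq[OF A(1), of "A \<inter> B"] card_subset_eq[OF B(1), of "A \<inter> B"] A(2) B(2)
    by auto
  with assms(3) show False
    by simp
qed

lemma containment_bij_choose_Int_le:
  assumes \<tau>: "bij_betw \<tau> (kset \<Omega> k) (kset \<Omega> k)"
    and contain: "\<forall>K\<in>kset \<Omega> k. \<forall>X\<in>kset \<Omega> n. K \<subseteq> X \<longrightarrow> \<tau> K \<subseteq> \<sigma> X"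
    and A: "A \<in> kset \<Omega> n" and B: "B \<in> kset \<Omega> n" and "\<sigma> A \<in> kset \<Omega> n"
  shows "card (A \<inter> B) choose k \<le> card (\<sigma> A \<inter> \<sigma> B) choose k"
proof -
  let ?W = "kset \<Omega> k" and ?subsets = "\<lambda>S. {K. K \<subseteq> S \<and> card K = k}"
  have sub_W: "?subsets (A \<inter> B) \<subseteq> ?W"
    using A by (auto simp: kset_def intro: finite_subset)
  have "\<tau> ` ?subsets (A \<inter> B) \<subseteq> ?subsets (\<sigma> A \<inter> \<sigma> B)"
  proof
    fix L assume "L \<in> \<tau> ` ?subsets (A \<inter> B)"
    then obtain K where K: "K \<in> ?W" "K \<subseteq> A" "K \<subseteq> B" "L = \<tau> K"
      using sub_W by blast
    have "\<tau> K \<subseteq> \<sigma> A" "\<tau> K \<subseteq> \<sigma> B"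
      using contain K(1-3) A B by blast+
    moreover have "card (\<tau> K) = k"
      using bij_betw_apply[OF \<tau> K(1)] by (simp add: kset_def)
    ultimately show "L \<in> ?subsets (\<sigma> A \<inter> \<sigma> B)"
      using K(4) by simp
  qed
  moreover have "finite (?subsets (\<sigma> A \<inter> \<sigma> B))"
    using \<open>\<sigma> A \<in> kset \<Omega> n\<close> by (auto simp: kset_def)
  moreover have "inj_on \<tau> (?subsets (A \<inter> B))"
    using bij_betw_imp_inj_on[OF \<tau>] sub_W by (rule inj_on_subset)
  ultimately have "card (?subsets (A \<inter> B)) \<le> card (?subsets (\<sigma> A \<inter> \<sigma> B))"
    by (intro card_inj_on_le)
  moreover have "card (?subsets (A \<inter> B)) = card (A \<inter> B) choose k"
    using n_subsets[of "A \<inter> B" k] A by (simp add: kset_def)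
  moreover have "card (?subsets (\<sigma> A \<inter> \<sigma> B)) = card (\<sigma> A \<inter> \<sigma> B) choose k"
    using n_subsets[of "\<sigma> A \<inter> \<sigma> B" k] \<open>\<sigma> A \<in> kset \<Omega> n\<close> by (simp add: kset_def)
  ultimately show ?thesis
    by simp
qed

lemma gamma_aut_preserves_johnson_adj:
  assumes "infinite \<Omega>" "0 < k" "k < n" "gamma_aut \<Omega> n k \<sigma>"
    and A: "A \<in> kset \<Omega> n" and B: "B \<in> kset \<Omega> n" and AB: "card (A \<inter> B) = n - 1"
  shows "card (\<sigma> A \<inter> \<sigma> B) = n - 1"
proof -
  let ?c = "card (\<sigma> A \<inter> \<sigma> B)"
  obtain \<tau> where \<tau>: "bij_betw \<tau> (kset \<Omega> k) (kset \<Omega> k)"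
    "\<forall>K\<in>kset \<Omega> k. \<forall>X\<in>kset \<Omega> n. K \<subseteq> X \<longleftrightarrow> \<tau> K \<subseteq> \<sigma> X"
    using gamma_aut_induced_kset_bij[OF assms(1,3,4)] .
  have \<sigma>AB: "\<sigma> A \<in> kset \<Omega> n" "\<sigma> B \<in> kset \<Omega> n"
    using A B gamma_autD(2)[OF assms(4)] by blast+
  have "\<forall>K\<in>kset \<Omega> k. \<forall>X\<in>kset \<Omega> n. K \<subseteq> X \<longrightarrow> \<tau> K \<subseteq> \<sigma> X"
    using \<tau>(2) by blast
  from containment_bij_choose_Int_le[OF \<tau>(1) this A B \<sigma>AB(1)]
  have le: "(n - 1) choose k \<le> ?c choose k"
    using AB by simp
  have "A \<noteq> B"
    using AB A assms(3) by (auto simp: kset_def)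
  then have "\<sigma> A \<noteq> \<sigma> B"
    using gamma_autD(1)[OF assms(4)] A B by (metis inj_onD)
  then have "?c < n"
    using kset_card_Int_less[OF \<sigma>AB] by blast
  show ?thesis
  proof (rule ccontr)
    assume "?c \<noteq> n - 1"
    with \<open>?c < n\<close> have "?c choose k < (n - 1) choose k"
      using assms(2,3) by (intro binomial_right_strict_mono) auto
    with le show False
      by simp
  qed
qed

lemma gamma_aut_johnson:
  assumes "infinite \<Omega>" "0 < k" "k < n" "gamma_aut \<Omega> n k \<sigma>"
  shows "gamma_aut \<Omega> n (n - 1) \<sigma>"
proof -
  let ?V = "kset \<Omega> n"
  have "card (\<sigma> A \<inter> \<sigma> B) = n - 1 \<longleftrightarrow> card (A \<inter> B) = n - 1"
    if A: "A \<in> ?V" and B: "B \<in> ?V" for A B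
  proof
    assume "card (A \<inter> B) = n - 1"
    then show "card (\<sigma> A \<inter> \<sigma> B) = n - 1"
      by (rule gamma_aut_preserves_johnson_adj[OF assms A B])
  next
    let ?\<rho> = "inv_into ?V \<sigma>"
    assume "card (\<sigma> A \<inter> \<sigma> B) = n - 1"
    moreover have "\<sigma> A \<in> ?V" "\<sigma> B \<in> ?V" "?\<rho> (\<sigma> A) = A" "?\<rho> (\<sigma> B) = B"
      using A B gamma_autD(1,2)[OF assms(4)] by auto
    ultimately show "card (A \<inter> B) = n - 1"
      using gamma_aut_preserves_johnson_adj[OF assms(1-3) gamma_aut_inv_into[OF assms(4)]]
      by metis
  qed
  then show ?thesis
    using assms(4) by (simp add: gamma_aut_def gamma_adj_def)
qed

lemma johnson_adj_iff_common_superset: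
  assumes "K \<in> kset \<Omega> m" "L \<in> kset \<Omega> m" "1 \<le> m"
  shows "card (K \<inter> L) = m - 1 \<longleftrightarrow> K \<noteq> L \<and> (\<exists>X\<in>kset \<Omega> (Suc m). K \<union> L \<subseteq> X)"
proof -
  have K: "finite K" "card K = m" "K \<subseteq> \<Omega>" and L: "finite L" "card L = m" "L \<subseteq> \<Omega>"
    using assms by (auto simp: kset_def)
  have Un_Int: "card (K \<union> L) + card (K \<inter> L) = 2 * m"
    using card_Un_Int[OF K(1) L(1)] K(2) L(2) by simp
  have Int_eq: "card (K \<inter> L) = m \<longleftrightarrow> K = L"
    using card_subset_eq[OF K(1), of "K \<inter> L"] card_subset_eq[OF L(1), of "K \<inter> L"] K(2) L(2)
    by auto
  have Int_le: "card (K \<inter> L) \<le> m"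
    using card_mono[OF K(1), of "K \<inter> L"] K(2) by simp
  show ?thesis
  proof
    assume "card (K \<inter> L) = m - 1"
    then have "K \<noteq> L" "card (K \<union> L) = Suc m"
      using Int_eq Un_Int assms(3) by auto
    moreover have "K \<union> L \<in> kset \<Omega> (Suc m)"
      using K L \<open>card (K \<union> L) = Suc m\<close> by (simp add: kset_def)
    ultimately show "K \<noteq> L \<and> (\<exists>X\<in>kset \<Omega> (Suc m). K \<union> L \<subseteq> X)"
      by blast
  next
    assume "K \<noteq> L \<and> (\<exists>X\<in>kset \<Omega> (Suc m). K \<union> L \<subseteq> X)"
    then obtain X where "K \<noteq> L" "X \<in> kset \<Omega> (Suc m)" "K \<union> L \<subseteq> X"
      by blast
    then have "card (K \<union> L) \<le> Suc m" "card (K \<inter> L) \<noteq> m"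
      using card_mono[of X "K \<union> L"] Int_eq by (auto simp: kset_def)
    then show "card (K \<inter> L) = m - 1"
      using Un_Int Int_le by linarith
  qed
qed

lemma johnson_aut_of_containment:
  assumes \<tau>: "bij_betw \<tau> (kset \<Omega> m) (kset \<Omega> m)"
    and \<sigma>: "\<sigma> ` kset \<Omega> (Suc m) = kset \<Omega> (Suc m)"
    and contain: "\<forall>K\<in>kset \<Omega> m. \<forall>X\<in>kset \<Omega> (Suc m). K \<subseteq> X \<longleftrightarrow> \<tau> K \<subseteq> \<sigma> X"
    and "1 \<le> m"
  shows "gamma_aut \<Omega> m (m - 1) \<tau>"
proof -
  let ?W = "kset \<Omega> m" and ?V = "kset \<Omega> (Suc m)"
  have "card (\<tau> K \<inter> \<tau> L) = m - 1 \<longleftrightarrow> card (K \<inter> L) = m - 1"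
    if K: "K \<in> ?W" and L: "L \<in> ?W" for K L
  proof -
    have "(\<exists>Z\<in>?V. \<tau> K \<union> \<tau> L \<subseteq> Z) \<longleftrightarrow> (\<exists>X\<in>?V. \<tau> K \<union> \<tau> L \<subseteq> \<sigma> X)"
      using \<sigma> by (metis (no_types, lifting) image_iff)
    also have "\<dots> \<longleftrightarrow> (\<exists>X\<in>?V. K \<union> L \<subseteq> X)"
      using contain K L by auto
    finally have "(\<exists>Z\<in>?V. \<tau> K \<union> \<tau> L \<subseteq> Z) \<longleftrightarrow> (\<exists>X\<in>?V. K \<union> L \<subseteq> X)" .
    moreover have "\<tau> K \<noteq> \<tau> L \<longleftrightarrow> K \<noteq> L"
      using bij_betw_imp_inj_on[OF \<tau>] K L by (metis inj_onD)
    moreover have "\<tau> K \<in> ?W" "\<tau> L \<in> ?W"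
      using \<tau> K L by (auto dest: bij_betw_apply)
    ultimately show ?thesis
      using johnson_adj_iff_common_superset[OF _ _ assms(4)] K L by metis
  qed
  with \<tau> show ?thesis
    by (simp add: gamma_aut_def gamma_adj_def)
qed

lemma kset_1_eq: "kset \<Omega> 1 = (\<lambda>x. {x}) ` \<Omega>"
  by (auto simp: kset_def card_1_singleton_iff)

lemma bij_kset_1_induced_by_perm:
  assumes "bij_betw \<sigma> (kset \<Omega> 1) (kset \<Omega> 1)"
  shows "induced_by_perm \<Omega> 1 \<sigma>"
proof -
  have sing: "bij_betw (\<lambda>x. {x}) \<Omega> (kset \<Omega> 1)"
    unfolding kset_1_eq by (simp add: bij_betw_def inj_on_def)
  have elem: "bij_betw the_elem (kset \<Omega> 1) \<Omega>"
    unfolding kset_1_eq by (rule bij_betw_byWitness[where f' = "\<lambda>x. {x}"]) auto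
  define g where "g = the_elem \<circ> \<sigma> \<circ> (\<lambda>x. {x})"
  have "bij_betw g \<Omega> \<Omega>"
    unfolding g_def using sing assms elem by (intro bij_betw_trans)
  moreover have "\<sigma> A = g ` A" if A: "A \<in> kset \<Omega> 1" for A
  proof -
    obtain x where x: "A = {x}"
      using A unfolding kset_1_eq by blast
    obtain y where "\<sigma> A = {y}"
      using bij_betw_apply[OF assms A] unfolding kset_1_eq by blast
    with x show ?thesis
      by (simp add: g_def)
  qed
  ultimately show ?thesis
    by (auto simp: induced_by_perm_def)
qed

lemma eq_image_if_facets_map_into:
  assumes "2 \<le> n" "inj_on g X" "X \<in> kset \<Omega> n" "Z \<in> kset \<Omega> n"
    and facets: "\<And>K. K \<in> kset \<Omega> (n - 1) \<Longrightarrow> K \<subseteq> X \<Longrightarrow> g ` K \<subseteq> Z"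
  shows "Z = g ` X"
proof -
  have X: "finite X" "card X = n" "X \<subseteq> \<Omega>" and Z: "finite Z" "card Z = n"
    using assms(3,4) by (auto simp: kset_def)
  have "g x \<in> Z" if x: "x \<in> X" for x
  proof -
    obtain y where y: "y \<in> X" "y \<noteq> x"
      using X(1,2) assms(1) x card_le_Suc0_iff_eq[OF X(1)] by (metis not_less_eq_eq numeral_2_eq_2)
    have "X - {y} \<in> kset \<Omega> (n - 1)"
      using X y(1) by (auto simp: kset_def)
    moreover have "x \<in> X - {y}"
      using x y(2) by blast
    ultimately show ?thesis
      using facets[of "X - {y}"] by blast
  qed
  moreover have "card (g ` X) = n"
    using card_image[OF assms(2)] X(2) by simp
  ultimately show ?thesis
    using card_subset_eq[OF Z(1), of "g ` X"] Z(2) by auto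
qed

lemma johnson_aut_induced_by_perm:
  assumes "infinite \<Omega>" "1 \<le> n" "gamma_aut \<Omega> n (n - 1) \<sigma>"
  shows "induced_by_perm \<Omega> n \<sigma>"
  using assms(2,3)
proof (induction n arbitrary: \<sigma> rule: nat_induct_at_least)
  case base
  then show ?case
    unfolding gamma_aut_def using bij_kset_1_induced_by_perm by blast
next
  case (Suc m)
  obtain \<tau> where \<tau>: "bij_betw \<tau> (kset \<Omega> m) (kset \<Omega> m)"
    and contain: "\<forall>K\<in>kset \<Omega> m. \<forall>X\<in>kset \<Omega> (Suc m). K \<subseteq> X \<longleftrightarrow> \<tau> K \<subseteq> \<sigma> X"
    using gamma_aut_induced_kset_bij[OF assms(1), of m "Suc m" \<sigma>] Suc.prems by auto
  note surj = gamma_autD(2)[OF Suc.prems]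
  have "induced_by_perm \<Omega> m \<tau>"
    using Suc.IH johnson_aut_of_containment[OF \<tau> surj contain Suc.hyps] .
  then obtain g where g: "bij_betw g \<Omega> \<Omega>" "\<forall>K\<in>kset \<Omega> m. \<tau> K = g ` K"
    unfolding induced_by_perm_def by blast
  have "\<sigma> X = g ` X" if X: "X \<in> kset \<Omega> (Suc m)" for X
  proof (rule eq_image_if_facets_map_into)
    show "inj_on g X"
      using g(1) X by (auto simp: bij_betw_def kset_def intro: inj_on_subset)
    show "\<sigma> X \<in> kset \<Omega> (Suc m)"
      using X surj by blast
    show "g ` K \<subseteq> \<sigma> X" if "K \<in> kset \<Omega> (Suc m - 1)" "K \<subseteq> X" for K
      using that contain g(2) X by auto
  qed (use Suc.hyps X in auto)
  with g(1) show ?case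
    by (auto simp: induced_by_perm_def)
qed

theorem proposition4p3:
  fixes \<Omega> :: "'a set" and j k :: nat and \<sigma> :: "'a set \<Rightarrow> 'a set"
  assumes "infinite \<Omega>" and "0 < k" and "k < j"
    and "gamma_aut \<Omega> j k \<sigma>"
  shows "induced_by_perm \<Omega> j \<sigma>"
proof -
  have "gamma_aut \<Omega> j (j - 1) \<sigma>"
    using gamma_aut_johnson[OF assms] .
  then show ?thesis
    using johnson_aut_induced_by_perm[OF assms(1)] assms(2,3) by simp
qed

end
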